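(* Let $X,Y$ be finite sets, $u:X\times Y\to\mathbb{R}$, $\rho\in\Delta(X)$ and $\phi\in\Delta(Y)$. A joint distribution $\gamma\in\Delta(X\times Y)$ with $X$-marginal $\rho$ and $Y$-marginal $\phi$ is the unique solution to the optimal transport problem \[\max_{\gamma'\in\Delta(X\times Y)}\sum_{x,y}u(x,y)\gamma'(x,y)\quad\text{s.t. }\gamma'\text{ has }X\text{-marginal }\rho\text{ and }Y\text{-marginal }\phi\] if and only if its support $\mathrm{supp}(\gamma)\subset X\times Y$ is strictly $u$-cyclically monotone.
   Context: A set $S\subset X\times Y$ is strictly $u$-cyclically monotone if for every finite collection of pairs $\{(x_i,y_i)\}_{i=1}^N\subset S$ such that the set $\{(x_i,y_i)\}_{i=1}^N$ differs from the set $\{(x_i,y_{i+1})\}_{i=1}^N$ (with the convention $y_{N+1}=y_1$), one has $\sum_{i=1}^Nu(x_i,y_i)>\sum_{i=1}^Nu(x_i,y_{i+1})$. *)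

theory Defs
  imports Complex_Main
begin

definition is_distribution :: "('a::finite \<Rightarrow> real) \<Rightarrow> bool" where
  "is_distribution p \<longleftrightarrow> (\<forall>a. p a \<ge> 0) \<and> (\<Sum>a\<in>UNIV. p a) = 1"

definition has_marginals ::
  "('x::finite \<times> 'y::finite \<Rightarrow> real) \<Rightarrow> ('x \<Rightarrow> real) \<Rightarrow> ('y \<Rightarrow> real) \<Rightarrow> bool" where
  "has_marginals g rho phi \<longleftrightarrow>
     (\<forall>x. (\<Sum>y\<in>UNIV. g (x, y)) = rho x) \<and> (\<forall>y. (\<Sum>x\<in>UNIV. g (x, y)) = phi y)"

definition support :: "('a \<Rightarrow> real) \<Rightarrow> 'a set" where
  "support g = {z. g z \<noteq> 0}"

definition transport_value :: "('x::finite \<times> 'y::finite \<Rightarrow> real) \<Rightarrow> ('x \<times> 'y \<Rightarrow> real) \<Rightarrow> real" where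
  "transport_value u g = (\<Sum>z\<in>UNIV. u z * g z)"

text \<open>Strict u-cyclical monotonicity: finite collections are indexed by i < N
  (repetitions allowed), cyclic shift y_{N+1} = y_1 realised by (i+1) mod N.\<close>
definition strictly_cyclically_monotone :: "('x \<times> 'y \<Rightarrow> real) \<Rightarrow> ('x \<times> 'y) set \<Rightarrow> bool" where
  "strictly_cyclically_monotone u S \<longleftrightarrow>
    (\<forall>N::nat. \<forall>xs :: nat \<Rightarrow> 'x. \<forall>ys :: nat \<Rightarrow> 'y.
       (\<forall>i<N. (xs i, ys i) \<in> S) \<longrightarrow>
       {(xs i, ys i) | i. i < N} \<noteq> {(xs i, ys ((i + 1) mod N)) | i. i < N} \<longrightarrow>
       (\<Sum>i<N. u (xs i, ys i)) > (\<Sum>i<N. u (xs i, ys ((i + 1) mod N))))"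

definition unique_ot_solution ::
  "('x::finite \<times> 'y::finite \<Rightarrow> real) \<Rightarrow> ('x \<Rightarrow> real) \<Rightarrow> ('y \<Rightarrow> real) \<Rightarrow> ('x \<times> 'y \<Rightarrow> real) \<Rightarrow> bool" where
  "unique_ot_solution u rho phi g \<longleftrightarrow>
     is_distribution g \<and> has_marginals g rho phi \<and>
     (\<forall>g'. is_distribution g' \<and> has_marginals g' rho phi \<and> g' \<noteq> g \<longrightarrow>
        transport_value u g' < transport_value u g)"

end

theory Submission
  imports Defs "HOL-Combinatorics.Orbits"
begin

text \<open>A cyclic family of pairs (x_k, y_k), k < N, defines a cycle flow: +1 at every shifted
  pair (x_k, y_(k+1 mod N)) and -1 at every pair (x_k, y_k), counted with multiplicity.
  It has zero marginals, and its \<open>u\<close>-value is the shifted sum minus the unshifted one.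

  If the support of \<open>g\<close> contains a cycle violating strict cyclical monotonicity, adding a
  small multiple of its flow to \<open>g\<close> gives a different feasible plan that is at least as
  good, so \<open>g\<close> is not the unique optimum.

  Conversely, the difference \<open>D\<close> of another feasible plan and \<open>g\<close> has zero marginals and
  is negative only on the support of \<open>g\<close>. Going along a row to a positive entry and along a
  column to a negative entry, alternately, eventually closes a cycle. Subtracting the largest
  multiple of its flow that keeps the positive entries of \<open>D\<close> nonnegative shrinks the support
  of \<open>D\<close> and, by strict cyclical monotonicity, removes a strictly negative amount of value.
  Induction on the size of the support shows that the value of \<open>D\<close> is negative.\<close>

definition occurrences :: "nat \<Rightarrow> (nat \<Rightarrow> 'a) \<Rightarrow> 'a \<Rightarrow> real" where
  "occurrences N p a = (\<Sum>k<N. of_bool (p k = a))"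

lemma occurrences_nonneg: "0 \<le> occurrences N p a"
  unfolding occurrences_def by (simp add: sum_nonneg)

lemma occurrences_le: "occurrences N p a \<le> real N"
proof -
  have "occurrences N p a \<le> (\<Sum>k<N. 1)"
    unfolding occurrences_def by (intro sum_mono) simp
  then show ?thesis by simp
qed

lemma occurrences_eq_0_iff: "occurrences N p a = 0 \<longleftrightarrow> a \<notin> p ` {..<N}"
  unfolding occurrences_def by (auto simp: sum_nonneg_eq_0_iff)

lemma occurrences_inj_on:
  assumes "inj_on p {..<N}"
  shows "occurrences N p a = of_bool (a \<in> p ` {..<N})"
proof (cases "a \<in> p ` {..<N}")
  case True
  then obtain j where j: "j < N" "a = p j" by auto
  have "occurrences N p a = (\<Sum>k<N. of_bool (k = j))"
    unfolding occurrences_def using assms j by (intro sum.cong) (auto simp: inj_on_def)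
  then show ?thesis using True j by simp
next
  case False
  then show ?thesis by (simp add: occurrences_eq_0_iff)
qed

lemma sum_mult_occurrences:
  fixes f :: "'a::finite \<Rightarrow> real"
  shows "(\<Sum>a\<in>UNIV. f a * occurrences N p a) = (\<Sum>k<N. f (p k))"
  unfolding occurrences_def sum_distrib_left
  by (subst sum.swap) (simp add: of_bool_def if_distrib[where f = "times _"] cong: if_cong)

lemma sum_of_bool_pair_eq_fst:
  "(\<Sum>y\<in>UNIV. of_bool (q = (x, y :: 'b::finite)) :: real) = of_bool (fst q = x)"
  by (cases q) (simp add: of_bool_def)

lemma sum_of_bool_pair_eq_snd:
  "(\<Sum>x\<in>UNIV. of_bool (q = (x :: 'a::finite, y)) :: real) = of_bool (snd q = y)"
  by (cases q) (simp add: of_bool_def)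

lemma sum_occurrences_row:
  fixes p :: "nat \<Rightarrow> 'a \<times> 'b::finite"
  shows "(\<Sum>y\<in>UNIV. occurrences N p (x, y)) = occurrences N (\<lambda>k. fst (p k)) x"
  unfolding occurrences_def by (subst sum.swap) (simp only: sum_of_bool_pair_eq_fst)

lemma sum_occurrences_col:
  fixes p :: "nat \<Rightarrow> 'a::finite \<times> 'b"
  shows "(\<Sum>x\<in>UNIV. occurrences N p (x, y)) = occurrences N (\<lambda>k. snd (p k)) y"
  unfolding occurrences_def by (subst sum.swap) (simp only: sum_of_bool_pair_eq_snd)

lemma bij_betw_Suc_mod: "bij_betw (\<lambda>k. Suc k mod N) {..<N} {..<N}"
  by (rule bij_betwI[where g = "\<lambda>k. (if k = 0 then N else k) - 1"]) (auto simp: mod_Suc)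

lemma occurrences_rotate: "occurrences N (\<lambda>k. p (Suc k mod N)) = occurrences N p"
  unfolding occurrences_def by (intro ext sum.reindex_bij_betw bij_betw_Suc_mod)

lemma has_marginals_diff:
  assumes "has_marginals g' rho phi" and "has_marginals g rho phi"
  shows "has_marginals (\<lambda>z. g' z - g z) (\<lambda>_. 0) (\<lambda>_. 0)"
  using assms unfolding has_marginals_def by (simp add: sum_subtractf)

lemma has_marginals_add_scaled:
  assumes "has_marginals g rho phi" and "has_marginals h (\<lambda>_. 0) (\<lambda>_. 0)"
  shows "has_marginals (\<lambda>z. g z + c * h z) rho phi"
  using assms unfolding has_marginals_def by (simp add: sum.distrib flip: sum_distrib_left)

lemma sum_eq_0_if_zero_marginals:
  fixes h :: "'x::finite \<times> 'y::finite \<Rightarrow> real"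
  assumes "has_marginals h (\<lambda>_. 0) (\<lambda>_. 0)"
  shows "(\<Sum>z\<in>UNIV. h z) = 0"
proof -
  have "(\<Sum>z\<in>UNIV. h z) = (\<Sum>x\<in>UNIV. \<Sum>y\<in>UNIV. h (x, y))"
    by (simp add: sum.cartesian_product)
  with assms show ?thesis by (simp add: has_marginals_def)
qed

lemma transport_value_add_scaled:
  "transport_value u (\<lambda>z. g z + c * h z) = transport_value u g + c * transport_value u h"
  unfolding transport_value_def by (simp add: algebra_simps sum.distrib sum_distrib_left)

lemma transport_value_diff:
  "transport_value u (\<lambda>z. g' z - g z) = transport_value u g' - transport_value u g"
  unfolding transport_value_def by (simp add: algebra_simps sum_subtractf)

definition cycle_flow :: "nat \<Rightarrow> (nat \<Rightarrow> 'x) \<Rightarrow> (nat \<Rightarrow> 'y) \<Rightarrow> 'x \<times> 'y \<Rightarrow> real" where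
  "cycle_flow N xs ys z =
     occurrences N (\<lambda>k. (xs k, ys (Suc k mod N))) z - occurrences N (\<lambda>k. (xs k, ys k)) z"

lemma has_marginals_cycle_flow:
  "has_marginals (cycle_flow N xs ys :: 'x::finite \<times> 'y::finite \<Rightarrow> real) (\<lambda>_. 0) (\<lambda>_. 0)"
  unfolding has_marginals_def cycle_flow_def
  by (simp add: sum_subtractf sum_occurrences_row sum_occurrences_col occurrences_rotate[of N ys])

lemma transport_value_cycle_flow:
  "transport_value u (cycle_flow N xs ys) =
     (\<Sum>k<N. u (xs k, ys (Suc k mod N))) - (\<Sum>k<N. u (xs k, ys k))"
  unfolding transport_value_def cycle_flow_def
  by (simp add: right_diff_distrib sum_subtractf sum_mult_occurrences)

lemma cycle_flow_nonzero:
  assumes "{(xs i, ys i) | i. i < N} \<noteq> {(xs i, ys ((i + 1) mod N)) | i. i < N}"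
  shows "cycle_flow N xs ys \<noteq> (\<lambda>_. 0)"
proof
  assume "cycle_flow N xs ys = (\<lambda>_. 0)"
  then have "occurrences N (\<lambda>k. (xs k, ys (Suc k mod N))) z = 0 \<longleftrightarrow>
      occurrences N (\<lambda>k. (xs k, ys k)) z = 0" for z
    unfolding cycle_flow_def fun_eq_iff by (metis eq_iff_diff_eq_0)
  then have "(\<lambda>k. (xs k, ys (Suc k mod N))) ` {..<N} = (\<lambda>k. (xs k, ys k)) ` {..<N}"
    unfolding occurrences_eq_0_iff by blast
  with assms show False by auto
qed

lemma cycle_flow_inj_on:
  assumes "inj_on ys {..<N}"
  shows "cycle_flow N xs ys z =
    of_bool (z \<in> (\<lambda>k. (xs k, ys (Suc k mod N))) ` {..<N}) -
    of_bool (z \<in> (\<lambda>k. (xs k, ys k)) ` {..<N})"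
proof -
  have "inj_on (\<lambda>k. ys (Suc k mod N)) {..<N}"
    using comp_inj_on[of "\<lambda>k. Suc k mod N" "{..<N}" ys] assms bij_betw_Suc_mod
    unfolding bij_betw_def o_def by simp
  then show ?thesis
    unfolding cycle_flow_def using assms
    by (simp add: occurrences_inj_on inj_on_def)
qed

lemma funpow_eventually_periodic:
  fixes h :: "'a::finite \<Rightarrow> 'a"
  obtains i where "(h ^^ i) a \<in> orbit h ((h ^^ i) a)"
proof -
  have "\<not> inj (\<lambda>n. (h ^^ n) a)"
    using finite_imageD[of "\<lambda>n. (h ^^ n) a" UNIV] by auto
  then obtain i j where "i < j" "(h ^^ i) a = (h ^^ j) a"
    unfolding inj_def by (metis linorder_neqE_nat)
  then have "(h ^^ (j - i)) ((h ^^ i) a) = (h ^^ i) a"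
    by (metis funpow_add le_add_diff_inverse2 less_imp_le o_apply)
  with \<open>i < j\<close> have "(h ^^ i) a \<in> orbit h ((h ^^ i) a)"
    unfolding orbit_altdef by (auto intro!: exI[of _ "j - i"])
  then show ?thesis ..
qed

lemma funpow_cycle_in_invariant_set:
  fixes h :: "'a::finite \<Rightarrow> 'a"
  assumes "b \<in> B" and "\<And>y. y \<in> B \<Longrightarrow> h y \<in> B"
  obtains N ys where "0 < N" "inj_on ys {..<N}" "\<And>k. ys k \<in> B"
    "\<And>k. k < N \<Longrightarrow> ys (Suc k mod N) = h (ys k)"
proof -
  have iter_in: "(h ^^ k) y \<in> B" if "y \<in> B" for y k
    using that assms(2) by (induction k) auto
  obtain i where periodic: "(h ^^ i) b \<in> orbit h ((h ^^ i) b)"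
    using funpow_eventually_periodic .
  define y0 where "y0 = (h ^^ i) b"
  define N where "N = funpow_dist1 h y0 y0"
  have "(h ^^ N) y0 = y0"
    using periodic unfolding N_def y0_def by (rule funpow_dist1_prop)
  then have "(h ^^ (Suc k mod N)) y0 = h ((h ^^ k) y0)" for k
    by (simp add: funpow_mod_eq)
  moreover have "inj_on (\<lambda>k. (h ^^ k) y0) {..<N}"
    using inj_on_funpow_dist1[OF periodic] unfolding N_def y0_def by (simp add: atLeast0LessThan)
  ultimately show ?thesis
    using iter_in assms(1) by (intro that[of N "\<lambda>k. (h ^^ k) y0"]) (auto simp: N_def y0_def)
qed

lemma sum_eq_0_neg_imp_pos:
  fixes f :: "'a \<Rightarrow> real"
  assumes "finite A" "sum f A = 0" "a \<in> A" "f a < 0"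
  shows "\<exists>b\<in>A. 0 < f b"
proof (rule ccontr)
  assume "\<not> ?thesis"
  then have "sum f A < sum (\<lambda>_. 0) A"
    using assms by (intro sum_strict_mono_ex1) (auto simp: not_less)
  with assms(2) show False by simp
qed

lemma zero_marginals_alternating_cycle:
  fixes D :: "'x::finite \<times> 'y::finite \<Rightarrow> real"
  assumes "has_marginals D (\<lambda>_. 0) (\<lambda>_. 0)" and "D \<noteq> (\<lambda>_. 0)"
  obtains N xs ys where "0 < N"
    "\<And>k. k < N \<Longrightarrow> D (xs k, ys k) < 0"
    "\<And>k. k < N \<Longrightarrow> 0 < D (xs k, ys (Suc k mod N))"
    "inj_on ys {..<N}"
proof -
  have row_pos: "\<exists>y'. 0 < D (x, y')" if "D (x, y) < 0" for x y
    using sum_eq_0_neg_imp_pos[of UNIV "\<lambda>y. D (x, y)"] that assms(1)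
    unfolding has_marginals_def by auto
  have col_neg: "\<exists>x'. D (x', y) < 0" if "0 < D (x, y)" for x y
    using sum_eq_0_neg_imp_pos[of UNIV "\<lambda>x. - D (x, y)"] that assms(1)
    unfolding has_marginals_def by (auto simp: sum_negf)
  define B where "B = {y. \<exists>x. D (x, y) < 0}"
  obtain b where "b \<in> B"
  proof -
    obtain x y where "D (x, y) \<noteq> 0"
      using assms(2) by fastforce
    then consider "D (x, y) < 0" | "0 < D (x, y)" by linarith
    then show thesis
      using col_neg that unfolding B_def by cases blast+
  qed
  define pos where "pos x = (SOME y. 0 < D (x, y))" for x
  define neg where "neg y = (SOME x. D (x, y) < 0)" for y
  have neg: "D (neg y, y) < 0" if "y \<in> B" for y
    using that unfolding B_def neg_def by (auto intro: someI)
  have pos: "0 < D (neg y, pos (neg y))" if "y \<in> B" for y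
    using row_pos[OF neg[OF that]] unfolding pos_def by (rule someI_ex)
  have "pos (neg y) \<in> B" if "y \<in> B" for y
    using col_neg[OF pos[OF that]] unfolding B_def by blast
  then obtain N ys where "0 < N" "inj_on ys {..<N}" "\<And>k. ys k \<in> B"
    "\<And>k. k < N \<Longrightarrow> ys (Suc k mod N) = pos (neg (ys k))"
    using funpow_cycle_in_invariant_set[of b B "pos \<circ> neg"] \<open>b \<in> B\<close> by auto
  then show ?thesis
    using neg pos by (intro that[where xs = "neg \<circ> ys"]) auto
qed

lemma strictly_cyclically_monotone_cancel_cycle:
  fixes D :: "'x::finite \<times> 'y::finite \<Rightarrow> real"
  assumes "strictly_cyclically_monotone u S"
    and "has_marginals D (\<lambda>_. 0) (\<lambda>_. 0)" "D \<noteq> (\<lambda>_. 0)" "{z. D z < 0} \<subseteq> S"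
  obtains C t where "has_marginals C (\<lambda>_. 0) (\<lambda>_. 0)" "transport_value u C < 0" "0 < t"
    "{z. D z - t * C z < 0} \<subseteq> S" "support (\<lambda>z. D z - t * C z) \<subset> support D"
proof -
  obtain N xs ys where "0 < N"
    and neg: "\<And>k. k < N \<Longrightarrow> D (xs k, ys k) < 0"
    and pos: "\<And>k. k < N \<Longrightarrow> 0 < D (xs k, ys (Suc k mod N))"
    and "inj_on ys {..<N}"
    using zero_marginals_alternating_cycle[OF assms(2,3)] by blast
  define P where "P = (\<lambda>k. (xs k, ys (Suc k mod N))) ` {..<N}"
  define E where "E = (\<lambda>k. (xs k, ys k)) ` {..<N}"
  have P_pos: "0 < D z" if "z \<in> P" for z
    using that pos unfolding P_def by auto
  have E_neg: "D z < 0" if "z \<in> E" for z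
    using that neg unfolding E_def by auto
  define C where "C = cycle_flow N xs ys"
  have C_eq: "C z = of_bool (z \<in> P) - of_bool (z \<in> E)" for z
    unfolding C_def P_def E_def using \<open>inj_on ys {..<N}\<close> by (rule cycle_flow_inj_on)
  have "transport_value u C < 0"
  proof -
    have "(xs 0, ys 0) \<in> E" "(xs 0, ys 0) \<notin> P"
      using \<open>0 < N\<close> E_neg P_pos unfolding E_def by force+
    then have "{(xs i, ys i) | i. i < N} \<noteq> {(xs i, ys ((i + 1) mod N)) | i. i < N}"
      unfolding E_def P_def by auto
    moreover have "\<forall>i<N. (xs i, ys i) \<in> S"
      using neg assms(4) by auto
    ultimately show ?thesis
      using assms(1) unfolding strictly_cyclically_monotone_def C_def transport_value_cycle_flow
      by auto
  qed
  have "finite P" "P \<noteq> {}"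
    using \<open>0 < N\<close> unfolding P_def by auto
  define t where "t = Min (D ` P)"
  have "t \<in> D ` P"
    unfolding t_def using \<open>finite P\<close> \<open>P \<noteq> {}\<close> by (intro Min_in) auto
  then obtain z0 where "z0 \<in> P" "t = D z0" by blast
  have t_le: "t \<le> D z" if "z \<in> P" for z
    using that \<open>finite P\<close> unfolding t_def by simp
  have "0 < t"
    using P_pos \<open>z0 \<in> P\<close> \<open>t = D z0\<close> by blast
  have "D z < 0" if "D z - t * C z < 0" for z
    using that t_le[of z] E_neg[of z] by (cases "z \<in> P"; cases "z \<in> E") (auto simp: C_eq)
  then have "{z. D z - t * C z < 0} \<subseteq> S"
    using assms(4) by blast
  moreover have "support (\<lambda>z. D z - t * C z) \<subset> support D"
  proof
    have "C z = 0" if "D z = 0" for z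
      using that P_pos[of z] E_neg[of z] by (auto simp: C_eq)
    then show "support (\<lambda>z. D z - t * C z) \<subseteq> support D"
      unfolding support_def by auto
    have "z0 \<notin> E"
      using \<open>z0 \<in> P\<close> P_pos E_neg by fastforce
    then have "z0 \<in> support D - support (\<lambda>z. D z - t * C z)"
      using \<open>t = D z0\<close> \<open>0 < t\<close> \<open>z0 \<in> P\<close> unfolding support_def by (simp add: C_eq)
    then show "support (\<lambda>z. D z - t * C z) \<noteq> support D"
      by blast
  qed
  ultimately show ?thesis
    using that has_marginals_cycle_flow \<open>transport_value u C < 0\<close> \<open>0 < t\<close>
    unfolding C_def by blast
qed

lemma strictly_cyclically_monotone_transport_value_neg:
  fixes D :: "'x::finite \<times> 'y::finite \<Rightarrow> real"
  assumes "strictly_cyclically_monotone u S"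
    and "has_marginals D (\<lambda>_. 0) (\<lambda>_. 0)" "D \<noteq> (\<lambda>_. 0)" "{z. D z < 0} \<subseteq> S"
  shows "transport_value u D < 0"
  using assms(2-)
proof (induction "card (support D)" arbitrary: D rule: less_induct)
  case less
  obtain C t where C: "has_marginals C (\<lambda>_. 0) (\<lambda>_. 0)" "transport_value u C < 0"
    and "0 < t" "{z. D z - t * C z < 0} \<subseteq> S" "support (\<lambda>z. D z - t * C z) \<subset> support D"
    using strictly_cyclically_monotone_cancel_cycle[OF assms(1) less.prems] .
  define D' where "D' z = D z - t * C z" for z
  have "transport_value u D' \<le> 0"
  proof (cases "D' = (\<lambda>_. 0)")
    case True
    then show ?thesis by (simp add: transport_value_def)
  next
    case False
    have "card (support D') < card (support D)"
      using \<open>support (\<lambda>z. D z - t * C z) \<subset> support D\<close> unfolding D'_def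
      by (intro psubset_card_mono) auto
    moreover have "has_marginals D' (\<lambda>_. 0) (\<lambda>_. 0)"
      using has_marginals_add_scaled[OF less.prems(1) C(1), of "- t"] unfolding D'_def by simp
    ultimately show ?thesis
      using less.hyps False \<open>{z. D z - t * C z < 0} \<subseteq> S\<close> unfolding D'_def by fastforce
  qed
  moreover have "transport_value u D = transport_value u D' + t * transport_value u C"
    unfolding D'_def transport_value_add_scaled[symmetric] by simp
  ultimately show ?case
    using \<open>0 < t\<close> C(2) by (simp add: mult_pos_neg add_nonpos_neg)
qed

lemma unique_ot_solution_if_strictly_cyclically_monotone:
  fixes g :: "'x::finite \<times> 'y::finite \<Rightarrow> real"
  assumes "is_distribution g" "has_marginals g rho phi"
    and "strictly_cyclically_monotone u (support g)"
  shows "unique_ot_solution u rho phi g"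
  unfolding unique_ot_solution_def
proof (intro conjI allI impI assms(1,2))
  fix g' assume g': "is_distribution g' \<and> has_marginals g' rho phi \<and> g' \<noteq> g"
  have "0 \<le> g' z" for z
    using g' unfolding is_distribution_def by blast
  then have "g z \<noteq> 0" if "g' z - g z < 0" for z
    using that by (metis diff_zero not_less)
  then have "{z. g' z - g z < 0} \<subseteq> support g"
    unfolding support_def by blast
  moreover have "(\<lambda>z. g' z - g z) \<noteq> (\<lambda>_. 0)"
    using g' by (auto simp: fun_eq_iff)
  moreover have "has_marginals (\<lambda>z. g' z - g z) (\<lambda>_. 0) (\<lambda>_. 0)"
    using g' assms(2) by (blast intro: has_marginals_diff)
  ultimately have "transport_value u (\<lambda>z. g' z - g z) < 0"
    using assms(3) by (blast intro: strictly_cyclically_monotone_transport_value_neg)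
  then show "transport_value u g' < transport_value u g"
    by (simp add: transport_value_diff)
qed

lemma cycle_flow_perturbation_nonneg:
  assumes "\<And>z. 0 \<le> g z" and "0 < N" and "\<And>k. k < N \<Longrightarrow> 0 < g (xs k, ys k)"
  obtains eps where "0 < eps" "\<And>z. 0 \<le> g z + eps * cycle_flow N xs ys z"
proof -
  define M where "M = Min ((\<lambda>k. g (xs k, ys k)) ` {..<N})"
  have "0 < M"
    unfolding M_def using assms(2,3) by (subst Min_gr_iff) auto
  define eps where "eps = M / real N"
  have "0 \<le> g z + eps * cycle_flow N xs ys z" for z
  proof (cases "z \<in> (\<lambda>k. (xs k, ys k)) ` {..<N}")
    case True
    then have "M \<le> g z"
      unfolding M_def by auto
    have "- real N \<le> cycle_flow N xs ys z"
      using occurrences_nonneg[of N "\<lambda>k. (xs k, ys (Suc k mod N))" z]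
        occurrences_le[of N "\<lambda>k. (xs k, ys k)" z]
      unfolding cycle_flow_def by linarith
    then have "eps * (- real N) \<le> eps * cycle_flow N xs ys z"
      using \<open>0 < M\<close> unfolding eps_def by (intro mult_left_mono) auto
    with \<open>M \<le> g z\<close> \<open>0 < N\<close> show ?thesis
      unfolding eps_def by simp
  next
    case False
    then have "0 \<le> cycle_flow N xs ys z"
      using occurrences_nonneg unfolding cycle_flow_def occurrences_eq_0_iff[symmetric] by simp
    then show ?thesis
      using assms(1)[of z] \<open>0 < M\<close> unfolding eps_def by simp
  qed
  moreover have "0 < eps"
    using \<open>0 < M\<close> \<open>0 < N\<close> unfolding eps_def by simp
  ultimately show ?thesis
    using that by blast
qed

lemma strictly_cyclically_monotone_if_unique_ot_solution:
  fixes g :: "'x::finite \<times> 'y::finite \<Rightarrow> real"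
  assumes "unique_ot_solution u rho phi g"
  shows "strictly_cyclically_monotone u (support g)"
  unfolding strictly_cyclically_monotone_def
proof (intro allI impI)
  fix N :: nat and xs :: "nat \<Rightarrow> 'x" and ys :: "nat \<Rightarrow> 'y"
  assume in_support: "\<forall>i<N. (xs i, ys i) \<in> support g"
    and differ: "{(xs i, ys i) | i. i < N} \<noteq> {(xs i, ys ((i + 1) mod N)) | i. i < N}"
  have g: "is_distribution g" "has_marginals g rho phi"
    using assms unfolding unique_ot_solution_def by auto
  have "0 < N"
    using differ by (cases N) auto
  moreover have g_nonneg: "0 \<le> g z" for z
    using g(1) unfolding is_distribution_def by (cases z) simp
  moreover have "0 < g (xs k, ys k)" if "k < N" for k
    using that in_support g_nonneg[of "(xs k, ys k)"] unfolding support_def by auto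
  ultimately obtain eps where "0 < eps" and nonneg: "\<And>z. 0 \<le> g z + eps * cycle_flow N xs ys z"
    using cycle_flow_perturbation_nonneg by blast
  define g' where "g' z = g z + eps * cycle_flow N xs ys z" for z
  have "(\<Sum>z\<in>UNIV. cycle_flow N xs ys z) = 0"
    using has_marginals_cycle_flow by (rule sum_eq_0_if_zero_marginals)
  then have "is_distribution g'"
    using g(1) nonneg
    unfolding is_distribution_def g'_def by (simp add: sum.distrib flip: sum_distrib_left)
  moreover have "has_marginals g' rho phi"
    unfolding g'_def using g(2) has_marginals_cycle_flow by (rule has_marginals_add_scaled)
  moreover have "g' \<noteq> g"
    using cycle_flow_nonzero[OF differ] \<open>0 < eps\<close> by (auto simp: g'_def fun_eq_iff)
  ultimately have "transport_value u g' < transport_value u g"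
    using assms unfolding unique_ot_solution_def by blast
  then have "transport_value u (cycle_flow N xs ys) < 0"
    using \<open>0 < eps\<close> unfolding g'_def transport_value_add_scaled by (simp add: mult_less_0_iff)
  then show "(\<Sum>i<N. u (xs i, ys ((i + 1) mod N))) < (\<Sum>i<N. u (xs i, ys i))"
    by (simp add: transport_value_cycle_flow)
qed

theorem proposition4:
  fixes u :: "'x::finite \<times> 'y::finite \<Rightarrow> real"
    and rho :: "'x \<Rightarrow> real" and phi :: "'y \<Rightarrow> real"
    and g :: "'x \<times> 'y \<Rightarrow> real"
  assumes "is_distribution rho" and "is_distribution phi"
    and "is_distribution g" and "has_marginals g rho phi"
  shows "unique_ot_solution u rho phi g \<longleftrightarrow> strictly_cyclically_monotone u (support g)"
  \<comment> \<open>The hypotheses on \<open>rho\<close> and \<open>phi\<close> are implied by those on \<open>g\<close> and not needed.\<close>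
  using assms(3,4) unique_ot_solution_if_strictly_cyclically_monotone
    strictly_cyclically_monotone_if_unique_ot_solution by blast

end
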